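(* Let $A$ be a commutative ring with $1\ne0$. The valuation divisibilities on $A$ correspond one-to-one to the Bourbaki valuations of $A$ (up to equivalence), via $v\mapsto |^v$ where $a|^vb\Leftrightarrow v(a)\le v(b)$; moreover $I(|^v)=v^{-1}(\infty)$.
   Context: A divisibility on $A$ is a binary relation $|\subseteq A\times A$ such that for all $a,b,c$: (1) $a|a$; (2) $a|b,\ b|c\Rightarrow a|c$; (3) $a|b,\ a|c\Rightarrow a|b-c$; (4) $a|b\Rightarrow ac|bc$; (5) $0\nmid1$. Support $I(|)=\{a;\ 0|a\}$. $|$ is total if $a|b$ or $b|a$ for all $a,b$; it has cancellation if $0\nmid c$ and $ac|bc$ imply $a|b$; it is a valuation divisibility if it is total and has cancellation. A Bourbaki valuation on $A$ is a map $v:A\to\Gamma\cup\{\infty\}$, $\Gamma$ an ordered abelian group, such that $I=v^{-1}(\infty)$ is a prime ideal of $A$ and there is a field valuation $\bar v$ on $\mathrm{Quot}(A/I)$ with $v(a)=\bar v(a+I)$ for all $a\in A$. Two Bourbaki valuations are equivalent if they have the same $v^{-1}(\infty)$ and their induced field valuations have the same valuation ring. *)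

theory Defs
  imports Main
begin

definition divisibility :: "('a::comm_ring_1 \<Rightarrow> 'a \<Rightarrow> bool) \<Rightarrow> bool" where
  "divisibility R \<longleftrightarrow>
     (\<forall>a. R a a) \<and>
     (\<forall>a b c. R a b \<longrightarrow> R b c \<longrightarrow> R a c) \<and>
     (\<forall>a b c. R a b \<longrightarrow> R a c \<longrightarrow> R a (b - c)) \<and>
     (\<forall>a b c. R a b \<longrightarrow> R (a * c) (b * c)) \<and>
     \<not> R 0 1"

definition div_support :: "('a::comm_ring_1 \<Rightarrow> 'a \<Rightarrow> bool) \<Rightarrow> 'a set" where
  "div_support R = {a. R 0 a}"

definition div_total :: "('a \<Rightarrow> 'a \<Rightarrow> bool) \<Rightarrow> bool" where
  "div_total R \<longleftrightarrow> (\<forall>a b. R a b \<or> R b a)"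

definition div_cancellation :: "('a::comm_ring_1 \<Rightarrow> 'a \<Rightarrow> bool) \<Rightarrow> bool" where
  "div_cancellation R \<longleftrightarrow> (\<forall>a b c. \<not> R 0 c \<longrightarrow> R (a * c) (b * c) \<longrightarrow> R a b)"

definition valuation_divisibility :: "('a::comm_ring_1 \<Rightarrow> 'a \<Rightarrow> bool) \<Rightarrow> bool" where
  "valuation_divisibility R \<longleftrightarrow> divisibility R \<and> div_total R \<and> div_cancellation R"

section \<open>Ordered abelian groups (explicit structures, so the value type may vary)\<close>

record 'g ogroup =
  gcar  :: "'g set"
  gadd  :: "'g \<Rightarrow> 'g \<Rightarrow> 'g"
  gzero :: "'g"
  gneg  :: "'g \<Rightarrow> 'g"
  gle   :: "'g \<Rightarrow> 'g \<Rightarrow> bool"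

definition ordered_ab_group :: "('g, 'm) ogroup_scheme \<Rightarrow> bool" where
  "ordered_ab_group G \<longleftrightarrow>
     gzero G \<in> gcar G \<and>
     (\<forall>x\<in>gcar G. \<forall>y\<in>gcar G. gadd G x y \<in> gcar G) \<and>
     (\<forall>x\<in>gcar G. gneg G x \<in> gcar G) \<and>
     (\<forall>x\<in>gcar G. \<forall>y\<in>gcar G. \<forall>z\<in>gcar G. gadd G (gadd G x y) z = gadd G x (gadd G y z)) \<and>
     (\<forall>x\<in>gcar G. \<forall>y\<in>gcar G. gadd G x y = gadd G y x) \<and>
     (\<forall>x\<in>gcar G. gadd G (gzero G) x = x) \<and>
     (\<forall>x\<in>gcar G. gadd G (gneg G x) x = gzero G) \<and>
     (\<forall>x\<in>gcar G. gle G x x) \<and>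
     (\<forall>x\<in>gcar G. \<forall>y\<in>gcar G. \<forall>z\<in>gcar G. gle G x y \<longrightarrow> gle G y z \<longrightarrow> gle G x z) \<and>
     (\<forall>x\<in>gcar G. \<forall>y\<in>gcar G. gle G x y \<longrightarrow> gle G y x \<longrightarrow> x = y) \<and>
     (\<forall>x\<in>gcar G. \<forall>y\<in>gcar G. gle G x y \<or> gle G y x) \<and>
     (\<forall>x\<in>gcar G. \<forall>y\<in>gcar G. \<forall>z\<in>gcar G. gle G x y \<longrightarrow> gle G (gadd G x z) (gadd G y z))"

text \<open>\<Gamma> \<union> {\<infinity>} is represented by the type g option, with None = \<infinity>.\<close>

definition vle :: "('g, 'm) ogroup_scheme \<Rightarrow> 'g option \<Rightarrow> 'g option \<Rightarrow> bool" where
  "vle G x y = (case y of None \<Rightarrow> True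
                 | Some b \<Rightarrow> (case x of None \<Rightarrow> False | Some a \<Rightarrow> gle G a b))"

definition vadd :: "('g, 'm) ogroup_scheme \<Rightarrow> 'g option \<Rightarrow> 'g option \<Rightarrow> 'g option" where
  "vadd G x y = (case x of None \<Rightarrow> None
                 | Some a \<Rightarrow> (case y of None \<Rightarrow> None | Some b \<Rightarrow> Some (gadd G a b)))"

definition vmin :: "('g, 'm) ogroup_scheme \<Rightarrow> 'g option \<Rightarrow> 'g option \<Rightarrow> 'g option" where
  "vmin G x y = (if vle G x y then x else y)"

definition in_gamma_inf :: "('g, 'm) ogroup_scheme \<Rightarrow> 'g option \<Rightarrow> bool" where
  "in_gamma_inf G x \<longleftrightarrow> x = None \<or> the x \<in> gcar G"

definition prime_ideal :: "'a::comm_ring_1 set \<Rightarrow> bool" where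
  "prime_ideal I \<longleftrightarrow>
     0 \<in> I \<and> (\<forall>a\<in>I. \<forall>b\<in>I. a - b \<in> I) \<and> (\<forall>a\<in>I. \<forall>r. r * a \<in> I) \<and>
     1 \<notin> I \<and> (\<forall>a b. a * b \<in> I \<longrightarrow> a \<in> I \<or> b \<in> I)"

text \<open>Elements of Quot(A/I) are classes of fractions a/s with s \<notin> I, where
  a/s = b/t iff a t - b s \<in> I.\<close>

definition frac_rel :: "'a::comm_ring_1 set \<Rightarrow> (('a \<times> 'a) \<times> ('a \<times> 'a)) set" where
  "frac_rel I = {((a, s), (b, t)). s \<notin> I \<and> t \<notin> I \<and> a * t - b * s \<in> I}"

definition frac_field :: "'a::comm_ring_1 set \<Rightarrow> ('a \<times> 'a) set set" where
  "frac_field I = {(a, s). s \<notin> I} // frac_rel I"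

definition frac :: "'a::comm_ring_1 set \<Rightarrow> 'a \<Rightarrow> 'a \<Rightarrow> ('a \<times> 'a) set" where
  "frac I a s = frac_rel I `` {(a, s)}"

definition frac_add :: "'a::comm_ring_1 set \<Rightarrow> ('a \<times> 'a) set \<Rightarrow> ('a \<times> 'a) set \<Rightarrow> ('a \<times> 'a) set" where
  "frac_add I X Y = (\<Union>p\<in>X. \<Union>q\<in>Y. frac I (fst p * snd q + fst q * snd p) (snd p * snd q))"

definition frac_mult :: "'a::comm_ring_1 set \<Rightarrow> ('a \<times> 'a) set \<Rightarrow> ('a \<times> 'a) set \<Rightarrow> ('a \<times> 'a) set" where
  "frac_mult I X Y = (\<Union>p\<in>X. \<Union>q\<in>Y. frac I (fst p * fst q) (snd p * snd q))"

definition frac_field_valuation ::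
  "'a::comm_ring_1 set \<Rightarrow> ('g, 'm) ogroup_scheme \<Rightarrow> (('a \<times> 'a) set \<Rightarrow> 'g option) \<Rightarrow> bool" where
  "frac_field_valuation I G w \<longleftrightarrow>
     (\<forall>x\<in>frac_field I. in_gamma_inf G (w x)) \<and>
     (\<forall>x\<in>frac_field I. w x = None \<longleftrightarrow> x = frac I 0 1) \<and>
     (\<forall>x\<in>frac_field I. \<forall>y\<in>frac_field I. w (frac_mult I x y) = vadd G (w x) (w y)) \<and>
     (\<forall>x\<in>frac_field I. \<forall>y\<in>frac_field I. vle G (vmin G (w x) (w y)) (w (frac_add I x y)))"

definition inf_set :: "('a \<Rightarrow> 'g option) \<Rightarrow> 'a set" where
  "inf_set v = {a. v a = None}"

definition induced_field_valuation ::
  "('g, 'm) ogroup_scheme \<Rightarrow> ('a::comm_ring_1 \<Rightarrow> 'g option) \<Rightarrow> (('a \<times> 'a) set \<Rightarrow> 'g option) \<Rightarrow> bool" where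
  "induced_field_valuation G v w \<longleftrightarrow>
     frac_field_valuation (inf_set v) G w \<and> (\<forall>a. v a = w (frac (inf_set v) a 1))"

definition bourbaki_valuation ::
  "('g, 'm) ogroup_scheme \<Rightarrow> ('a::comm_ring_1 \<Rightarrow> 'g option) \<Rightarrow> bool" where
  "bourbaki_valuation G v \<longleftrightarrow>
     ordered_ab_group G \<and> (\<forall>a. in_gamma_inf G (v a)) \<and>
     prime_ideal (inf_set v) \<and> (\<exists>w. induced_field_valuation G v w)"

definition field_valuation_ring ::
  "'a::comm_ring_1 set \<Rightarrow> ('g, 'm) ogroup_scheme \<Rightarrow> (('a \<times> 'a) set \<Rightarrow> 'g option) \<Rightarrow> ('a \<times> 'a) set set" where
  "field_valuation_ring I G w = {x \<in> frac_field I. vle G (Some (gzero G)) (w x)}"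

definition bourbaki_equiv ::
  "('g, 'm) ogroup_scheme \<Rightarrow> ('a::comm_ring_1 \<Rightarrow> 'g option) \<Rightarrow>
   ('h, 'n) ogroup_scheme \<Rightarrow> ('a \<Rightarrow> 'h option) \<Rightarrow> bool" where
  "bourbaki_equiv G1 v1 G2 v2 \<longleftrightarrow>
     inf_set v1 = inf_set v2 \<and>
     (\<exists>w1 w2. induced_field_valuation G1 v1 w1 \<and> induced_field_valuation G2 v2 w2 \<and>
        field_valuation_ring (inf_set v1) G1 w1 = field_valuation_ring (inf_set v2) G2 w2)"

definition val_div :: "('g, 'm) ogroup_scheme \<Rightarrow> ('a \<Rightarrow> 'g option) \<Rightarrow> 'a \<Rightarrow> 'a \<Rightarrow> bool" where
  "val_div G v a b \<longleftrightarrow> vle G (v a) (v b)"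

end

theory Submission
  imports Defs
begin

text \<open>
  A Bourbaki valuation \<open>v\<close> is multiplicative and ultrametric on \<open>A\<close>, and \<open>v(-1) = 0\<close> since
  ordered groups are torsion free; these facts are exactly the divisibility axioms for
  \<open>a |\<^sup>v b \<longleftrightarrow> v a \<le> v b\<close>, while cancellation in \<open>\<Gamma>\<close> gives cancellation for \<open>|\<^sup>v\<close>.
  Since \<open>a/s\<close> lies in the valuation ring of the induced field valuation iff \<open>s |\<^sup>v a\<close>, and
  \<open>v\<^sup>-\<^sup>1(\<infinity>)\<close> is the support of \<open>|\<^sup>v\<close>, two valuations are equivalent iff their divisibilities agree.
  Conversely, a valuation divisibility \<open>|\<close> has a prime support \<open>I\<close>; on fractions \<open>a/s\<close> with
  \<open>a, s \<notin> I\<close> the relation \<open>a t | b s\<close> is a total preorder compatible with multiplication, its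
  classes form an ordered group \<open>\<Gamma>\<close>, and \<open>a \<mapsto> [a/1]\<close> (\<open>\<infinity>\<close> on \<open>I\<close>) is a Bourbaki valuation
  inducing \<open>|\<close>.
\<close>

section \<open>Fractions modulo a prime ideal\<close>

context
  fixes I :: "'a::comm_ring_1 set"
  assumes prime: "prime_ideal I"
begin

lemma prime_ideal_zero: "0 \<in> I"
  using prime by (simp add: prime_ideal_def)

lemma prime_ideal_diff: "a \<in> I \<Longrightarrow> b \<in> I \<Longrightarrow> a - b \<in> I"
  using prime by (simp add: prime_ideal_def)

lemma prime_ideal_mult: "a \<in> I \<Longrightarrow> r * a \<in> I"
  using prime by (simp add: prime_ideal_def)

lemma prime_ideal_uminus: "a \<in> I \<Longrightarrow> - a \<in> I"
  using prime_ideal_diff[OF prime_ideal_zero] by fastforce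

lemma prime_ideal_add: "a \<in> I \<Longrightarrow> b \<in> I \<Longrightarrow> a + b \<in> I"
  using prime_ideal_diff[of a "- b"] prime_ideal_uminus[of b] by simp

lemma prime_ideal_one: "1 \<notin> I"
  using prime by (simp add: prime_ideal_def)

lemma prime_ideal_mult_notin: "a \<notin> I \<Longrightarrow> b \<notin> I \<Longrightarrow> a * b \<notin> I"
  using prime by (auto simp: prime_ideal_def)

lemma prime_ideal_linear_comb: "x \<in> I \<Longrightarrow> y \<in> I \<Longrightarrow> r * x + s * y \<in> I"
  by (intro prime_ideal_add prime_ideal_mult)

lemma equiv_frac_rel: "equiv {(a, s). s \<notin> I} (frac_rel I)"
proof (rule equivI)
  show "frac_rel I \<subseteq> {(a, s). s \<notin> I} \<times> {(a, s). s \<notin> I}"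
    by (auto simp: frac_rel_def)
  show "refl_on {(a, s). s \<notin> I} (frac_rel I)"
    by (auto simp: refl_on_def frac_rel_def prime_ideal_zero)
  show "sym (frac_rel I)"
  proof (rule symI)
    fix x y
    assume "(x, y) \<in> frac_rel I"
    then show "(y, x) \<in> frac_rel I"
      using prime_ideal_uminus by (cases x, cases y) (fastforce simp: frac_rel_def)
  qed
  show "trans (frac_rel I)"
  proof (rule transI)
    fix x y z
    assume "(x, y) \<in> frac_rel I" "(y, z) \<in> frac_rel I"
    then obtain a s b t c u where xyz: "x = (a, s)" "y = (b, t)" "z = (c, u)"
      and h: "s \<notin> I" "t \<notin> I" "u \<notin> I" "a * t - b * s \<in> I" "b * u - c * t \<in> I"
      by (cases x, cases y, cases z) (auto simp: frac_rel_def)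
    have "t * (a * u - c * s) = u * (a * t - b * s) + s * (b * u - c * t)"
      by (simp add: algebra_simps)
    also have "\<dots> \<in> I"
      using h by (intro prime_ideal_linear_comb)
    finally have "a * u - c * s \<in> I"
      using h(2) prime by (auto simp: prime_ideal_def)
    with h show "(x, z) \<in> frac_rel I"
      by (simp add: frac_rel_def xyz)
  qed
qed

lemma frac_eq_iff: "s \<notin> I \<Longrightarrow> t \<notin> I \<Longrightarrow> frac I a s = frac I b t \<longleftrightarrow> a * t - b * s \<in> I"
  using eq_equiv_class_iff[OF equiv_frac_rel, of "(a, s)" "(b, t)"]
  by (simp add: frac_def frac_rel_def)

lemma mem_frac_iff:
  "s \<notin> I \<Longrightarrow> p \<in> frac I a s \<longleftrightarrow> snd p \<notin> I \<and> frac I (fst p) (snd p) = frac I a s"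
proof -
  assume s: "s \<notin> I"
  have "p \<in> frac I a s \<longleftrightarrow> ((a, s), p) \<in> frac_rel I"
    by (simp add: frac_def)
  also have "\<dots> \<longleftrightarrow> snd p \<notin> I \<and> frac I a s = frac I (fst p) (snd p)"
    using s by (cases p) (simp add: frac_rel_def frac_eq_iff cong: conj_cong)
  finally show ?thesis
    by auto
qed

lemma frac_in_frac_field: "s \<notin> I \<Longrightarrow> frac I a s \<in> frac_field I"
  unfolding frac_field_def frac_def by (rule quotientI) simp

lemma frac_fieldE:
  assumes "X \<in> frac_field I"
  obtains a s where "s \<notin> I" "X = frac I a s"
  using assms unfolding frac_field_def frac_def by (auto elim!: quotientE)

lemma frac_operation_eq:
  assumes "s \<notin> I" "t \<notin> I"
    and "\<And>a' s' b' t'. s' \<notin> I \<Longrightarrow> t' \<notin> I \<Longrightarrow> frac I a' s' = frac I a s \<Longrightarrow>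
           frac I b' t' = frac I b t \<Longrightarrow> F (a', s') (b', t') = C"
  shows "(\<Union>p\<in>frac I a s. \<Union>q\<in>frac I b t. F p q) = C"
proof -
  have "F p q = C" if "p \<in> frac I a s" "q \<in> frac I b t" for p q
    using that assms by (cases p, cases q) (simp add: mem_frac_iff)
  moreover have "(a, s) \<in> frac I a s" "(b, t) \<in> frac I b t"
    using assms(1,2) by (simp_all add: mem_frac_iff)
  ultimately show ?thesis
    by blast
qed

lemma frac_mult_frac:
  assumes "s \<notin> I" "t \<notin> I"
  shows "frac_mult I (frac I a s) (frac I b t) = frac I (a * b) (s * t)"
  unfolding frac_mult_def
proof (rule frac_operation_eq[OF assms])
  fix a' s' b' t'
  assume "s' \<notin> I" "t' \<notin> I" "frac I a' s' = frac I a s" "frac I b' t' = frac I b t"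
  then have "a' * s - a * s' \<in> I" "b' * t - b * t' \<in> I"
    using assms by (simp_all add: frac_eq_iff)
  then have "(b' * t) * (a' * s - a * s') + (a * s') * (b' * t - b * t') \<in> I"
    by (rule prime_ideal_linear_comb)
  then show "frac I (fst (a', s') * fst (b', t')) (snd (a', s') * snd (b', t')) = frac I (a * b) (s * t)"
    using assms \<open>s' \<notin> I\<close> \<open>t' \<notin> I\<close>
    by (simp add: frac_eq_iff prime_ideal_mult_notin algebra_simps)
qed

lemma frac_add_frac:
  assumes "s \<notin> I" "t \<notin> I"
  shows "frac_add I (frac I a s) (frac I b t) = frac I (a * t + b * s) (s * t)"
  unfolding frac_add_def
proof (rule frac_operation_eq[OF assms])
  fix a' s' b' t'
  assume "s' \<notin> I" "t' \<notin> I" "frac I a' s' = frac I a s" "frac I b' t' = frac I b t"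
  then have "a' * s - a * s' \<in> I" "b' * t - b * t' \<in> I"
    using assms by (simp_all add: frac_eq_iff)
  then have "(t * t') * (a' * s - a * s') + (s * s') * (b' * t - b * t') \<in> I"
    by (rule prime_ideal_linear_comb)
  then show "frac I (fst (a', s') * snd (b', t') + fst (b', t') * snd (a', s'))
      (snd (a', s') * snd (b', t')) = frac I (a * t + b * s) (s * t)"
    using assms \<open>s' \<notin> I\<close> \<open>t' \<notin> I\<close>
    by (simp add: frac_eq_iff prime_ideal_mult_notin algebra_simps)
qed

end

section \<open>Ordered abelian groups and \<open>\<Gamma> \<union> {\<infinity>}\<close>\<close>

context
  fixes G :: "('g, 'm) ogroup_scheme"
  assumes ordered: "ordered_ab_group G"
begin

lemma ogroup_zero_closed: "gzero G \<in> gcar G"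
  using ordered unfolding ordered_ab_group_def by metis

lemma ogroup_add_closed: "x \<in> gcar G \<Longrightarrow> y \<in> gcar G \<Longrightarrow> gadd G x y \<in> gcar G"
  using ordered unfolding ordered_ab_group_def by metis

lemma ogroup_neg_closed: "x \<in> gcar G \<Longrightarrow> gneg G x \<in> gcar G"
  using ordered unfolding ordered_ab_group_def by metis

lemma ogroup_add_assoc:
  "x \<in> gcar G \<Longrightarrow> y \<in> gcar G \<Longrightarrow> z \<in> gcar G \<Longrightarrow> gadd G (gadd G x y) z = gadd G x (gadd G y z)"
  using ordered unfolding ordered_ab_group_def by metis

lemma ogroup_add_commute: "x \<in> gcar G \<Longrightarrow> y \<in> gcar G \<Longrightarrow> gadd G x y = gadd G y x"
  using ordered unfolding ordered_ab_group_def by metis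

lemma ogroup_add_zero_left: "x \<in> gcar G \<Longrightarrow> gadd G (gzero G) x = x"
  using ordered unfolding ordered_ab_group_def by metis

lemma ogroup_add_neg_left: "x \<in> gcar G \<Longrightarrow> gadd G (gneg G x) x = gzero G"
  using ordered unfolding ordered_ab_group_def by metis

lemma ogroup_le_refl: "x \<in> gcar G \<Longrightarrow> gle G x x"
  using ordered unfolding ordered_ab_group_def by metis

lemma ogroup_le_trans:
  "x \<in> gcar G \<Longrightarrow> y \<in> gcar G \<Longrightarrow> z \<in> gcar G \<Longrightarrow> gle G x y \<Longrightarrow> gle G y z \<Longrightarrow> gle G x z"
  using ordered unfolding ordered_ab_group_def by metis

lemma ogroup_le_antisym: "x \<in> gcar G \<Longrightarrow> y \<in> gcar G \<Longrightarrow> gle G x y \<Longrightarrow> gle G y x \<Longrightarrow> x = y"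
  using ordered unfolding ordered_ab_group_def by metis

lemma ogroup_le_total: "x \<in> gcar G \<Longrightarrow> y \<in> gcar G \<Longrightarrow> gle G x y \<or> gle G y x"
  using ordered unfolding ordered_ab_group_def by metis

lemma ogroup_add_right_mono:
  "x \<in> gcar G \<Longrightarrow> y \<in> gcar G \<Longrightarrow> z \<in> gcar G \<Longrightarrow> gle G x y \<Longrightarrow> gle G (gadd G x z) (gadd G y z)"
  using ordered unfolding ordered_ab_group_def by metis

lemma ogroup_add_neg_cancel:
  assumes x: "x \<in> gcar G" and z: "z \<in> gcar G"
  shows "gadd G (gadd G x z) (gneg G z) = x"
proof -
  have "gadd G (gadd G x z) (gneg G z) = gadd G x (gadd G (gneg G z) z)"
    using x z ogroup_neg_closed ogroup_add_assoc ogroup_add_commute by metis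
  also have "\<dots> = x"
    using x z ogroup_zero_closed ogroup_add_neg_left ogroup_add_commute ogroup_add_zero_left
    by metis
  finally show ?thesis .
qed

lemma ogroup_add_right_cancel:
  "x \<in> gcar G \<Longrightarrow> y \<in> gcar G \<Longrightarrow> z \<in> gcar G \<Longrightarrow> gadd G x z = gadd G y z \<Longrightarrow> x = y"
  by (metis ogroup_add_neg_cancel)

lemma ogroup_add_right_le_cancel:
  "x \<in> gcar G \<Longrightarrow> y \<in> gcar G \<Longrightarrow> z \<in> gcar G \<Longrightarrow> gle G (gadd G x z) (gadd G y z) \<Longrightarrow> gle G x y"
  by (metis ogroup_add_neg_cancel ogroup_add_right_mono ogroup_add_closed ogroup_neg_closed)

lemma ogroup_idempotent_eq_zero: "x \<in> gcar G \<Longrightarrow> gadd G x x = x \<Longrightarrow> x = gzero G"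
  by (metis ogroup_add_right_cancel ogroup_add_zero_left ogroup_zero_closed)

text \<open>Ordered groups are torsion free: \<open>x \<le> 0\<close> gives \<open>x + x \<le> x\<close>, and symmetrically.\<close>

lemma ogroup_double_eq_zero:
  assumes x: "x \<in> gcar G" and double: "gadd G x x = gzero G"
  shows "x = gzero G"
proof -
  have "gle G x (gzero G) \<longleftrightarrow> gle G (gadd G x x) (gadd G (gzero G) x)"
    using x ogroup_zero_closed ogroup_add_right_mono ogroup_add_right_le_cancel by blast
  moreover have "gle G (gzero G) x \<longleftrightarrow> gle G (gadd G (gzero G) x) (gadd G x x)"
    using x ogroup_zero_closed ogroup_add_right_mono ogroup_add_right_le_cancel by blast
  ultimately show ?thesis
    using ogroup_le_total[OF x ogroup_zero_closed] ogroup_le_antisym[OF x ogroup_zero_closed]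
    by (auto simp: double ogroup_add_zero_left x)
qed

lemma in_gamma_infE:
  assumes "in_gamma_inf G x"
  obtains "x = None" | a where "x = Some a" "a \<in> gcar G"
  using assms by (cases x) (auto simp: in_gamma_inf_def)

lemma vle_None_left: "vle G None y \<longleftrightarrow> y = None"
  by (cases y) (simp_all add: vle_def)

lemma vle_refl: "in_gamma_inf G x \<Longrightarrow> vle G x x"
  by (erule in_gamma_infE) (simp_all add: vle_def ogroup_le_refl)

lemma vle_trans:
  "in_gamma_inf G x \<Longrightarrow> in_gamma_inf G y \<Longrightarrow> in_gamma_inf G z \<Longrightarrow> vle G x y \<Longrightarrow> vle G y z \<Longrightarrow> vle G x z"
  by (erule in_gamma_infE; erule in_gamma_infE; erule in_gamma_infE)
    (auto simp: vle_def intro: ogroup_le_trans)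

lemma vle_antisym: "in_gamma_inf G x \<Longrightarrow> in_gamma_inf G y \<Longrightarrow> vle G x y \<Longrightarrow> vle G y x \<Longrightarrow> x = y"
  by (erule in_gamma_infE; erule in_gamma_infE) (auto simp: vle_def intro: ogroup_le_antisym)

lemma vle_total: "in_gamma_inf G x \<Longrightarrow> in_gamma_inf G y \<Longrightarrow> vle G x y \<or> vle G y x"
  by (erule in_gamma_infE; erule in_gamma_infE) (auto simp: vle_def dest: ogroup_le_total)

lemma vadd_right_mono:
  "in_gamma_inf G x \<Longrightarrow> in_gamma_inf G y \<Longrightarrow> in_gamma_inf G z \<Longrightarrow> vle G x y \<Longrightarrow>
    vle G (vadd G x z) (vadd G y z)"
  by (erule in_gamma_infE; erule in_gamma_infE; erule in_gamma_infE)
    (auto simp: vle_def vadd_def intro: ogroup_add_right_mono)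

lemma vadd_right_le_cancel:
  "in_gamma_inf G x \<Longrightarrow> in_gamma_inf G y \<Longrightarrow> c \<in> gcar G \<Longrightarrow>
    vle G (vadd G x (Some c)) (vadd G y (Some c)) \<Longrightarrow> vle G x y"
  by (erule in_gamma_infE; erule in_gamma_infE)
    (auto simp: vle_def vadd_def intro: ogroup_add_right_le_cancel)

lemma vle_zero_iff_vadd:
  "in_gamma_inf G y \<Longrightarrow> c \<in> gcar G \<Longrightarrow> vle G (Some (gzero G)) y \<longleftrightarrow> vle G (Some c) (vadd G y (Some c))"
proof (erule in_gamma_infE)
  fix b
  assume "y = Some b" "b \<in> gcar G" "c \<in> gcar G"
  moreover have "gle G (gzero G) b \<longleftrightarrow> gle G (gadd G (gzero G) c) (gadd G b c)"
    using calculation ogroup_zero_closed ogroup_add_right_mono ogroup_add_right_le_cancel by blast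
  ultimately show ?thesis
    by (simp add: vle_def vadd_def ogroup_add_zero_left)
qed (simp add: vle_def vadd_def)

end

locale bourbaki_val =
  fixes G :: "('g, 'm) ogroup_scheme" and v :: "'a::comm_ring_1 \<Rightarrow> 'g option"
    and w :: "('a \<times> 'a) set \<Rightarrow> 'g option"
  assumes ordered: "ordered_ab_group G"
    and v_in_gamma_inf: "in_gamma_inf G (v a)"
    and prime: "prime_ideal (inf_set v)"
    and induced: "induced_field_valuation G v w"
begin

abbreviation I :: "'a set" where "I \<equiv> inf_set v"

lemma v_eq_None_iff: "v a = None \<longleftrightarrow> a \<in> I"
  by (simp add: inf_set_def)

lemma v_eq_w: "v a = w (frac I a 1)"
  using induced by (simp add: induced_field_valuation_def)

lemma w_in_gamma_inf: "X \<in> frac_field I \<Longrightarrow> in_gamma_inf G (w X)"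
  using induced by (simp add: induced_field_valuation_def frac_field_valuation_def)

lemma w_frac_mult:
  "X \<in> frac_field I \<Longrightarrow> Y \<in> frac_field I \<Longrightarrow> w (frac_mult I X Y) = vadd G (w X) (w Y)"
  using induced by (simp add: induced_field_valuation_def frac_field_valuation_def)

lemma w_frac_add:
  "X \<in> frac_field I \<Longrightarrow> Y \<in> frac_field I \<Longrightarrow> vle G (vmin G (w X) (w Y)) (w (frac_add I X Y))"
  using induced by (simp add: induced_field_valuation_def frac_field_valuation_def)

lemma frac_one_in_frac_field: "frac I a 1 \<in> frac_field I"
  using frac_in_frac_field[OF prime prime_ideal_one[OF prime]] .

lemma v_mult: "v (a * b) = vadd G (v a) (v b)"
  using w_frac_mult[OF frac_one_in_frac_field frac_one_in_frac_field]
  by (simp add: v_eq_w frac_mult_frac[OF prime] prime_ideal_one[OF prime])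

lemma v_add: "vle G (vmin G (v a) (v b)) (v (a + b))"
  using w_frac_add[OF frac_one_in_frac_field frac_one_in_frac_field]
  by (simp add: v_eq_w frac_add_frac[OF prime] prime_ideal_one[OF prime])

lemma v_zero: "v 0 = None"
  by (simp add: v_eq_None_iff prime_ideal_zero[OF prime])

lemma v_not_None: "a \<notin> I \<Longrightarrow> \<exists>g\<in>gcar G. v a = Some g"
  using v_in_gamma_inf[of a] by (auto simp: v_eq_None_iff elim: in_gamma_infE[OF ordered])

lemma v_one: "v 1 = Some (gzero G)"
proof -
  obtain g where g: "g \<in> gcar G" "v 1 = Some g"
    using v_not_None prime_ideal_one[OF prime] by blast
  have "gadd G g g = g"
    using v_mult[of 1 1] g(2) by (simp add: vadd_def)
  with g show ?thesis
    using ogroup_idempotent_eq_zero[OF ordered] by simp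
qed

lemma v_minus_one: "v (- 1) = Some (gzero G)"
proof -
  have "(- 1) * (- 1) \<notin> I"
    using prime_ideal_one[OF prime] by simp
  then obtain g where g: "g \<in> gcar G" "v (- 1) = Some g"
    using v_not_None prime_ideal_mult[OF prime] by blast
  have "gadd G g g = gzero G"
    using v_mult[of "- 1" "- 1"] g(2) v_one by (simp add: vadd_def)
  with g show ?thesis
    using ogroup_double_eq_zero[OF ordered] by simp
qed

lemma v_uminus: "v (- a) = v a"
  using v_mult[of "- 1" a] v_minus_one v_in_gamma_inf[of a]
  by (auto simp: vadd_def ogroup_add_zero_left[OF ordered] elim: in_gamma_infE[OF ordered])

lemma v_diff: "vle G (vmin G (v a) (v b)) (v (a - b))"
  using v_add[of a "- b"] by (simp add: v_uminus)

lemma v_frac_decomp: "s \<notin> I \<Longrightarrow> v a = vadd G (w (frac I a s)) (v s)"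
proof -
  assume s: "s \<notin> I"
  have decomp: "frac_mult I (frac I a s) (frac I s 1) = frac I a 1"
    using s prime_ideal_one[OF prime] prime_ideal_zero[OF prime]
    by (simp add: frac_mult_frac[OF prime] frac_eq_iff[OF prime] prime_ideal_mult_notin[OF prime]
        mult.commute)
  show ?thesis
    using w_frac_mult[OF frac_in_frac_field[OF prime s] frac_one_in_frac_field, of a s]
    by (simp add: decomp v_eq_w[symmetric])
qed

lemma frac_in_valuation_ring_iff:
  "s \<notin> I \<Longrightarrow> frac I a s \<in> field_valuation_ring I G w \<longleftrightarrow> vle G (v s) (v a)"
  using v_not_None[of s] vle_zero_iff_vadd[OF ordered w_in_gamma_inf[OF frac_in_frac_field[OF prime]]]
    v_frac_decomp[of s a]
  by (fastforce simp: field_valuation_ring_def frac_in_frac_field[OF prime])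

lemma valuation_divisibility_val_div: "valuation_divisibility (val_div G v)"
proof -
  have "divisibility (val_div G v)"
    unfolding divisibility_def val_div_def
  proof (intro conjI allI impI)
    show "vle G (v a) (v a)" for a
      using vle_refl[OF ordered v_in_gamma_inf] .
    show "vle G (v a) (v c)" if "vle G (v a) (v b)" "vle G (v b) (v c)" for a b c
      using that vle_trans[OF ordered v_in_gamma_inf v_in_gamma_inf v_in_gamma_inf] by blast
    show "vle G (v a) (v (b - c))" if "vle G (v a) (v b)" "vle G (v a) (v c)" for a b c
      using that v_diff[of b c] vle_trans[OF ordered v_in_gamma_inf v_in_gamma_inf v_in_gamma_inf]
      by (cases "vle G (v b) (v c)") (auto simp: vmin_def)
    show "vle G (v (a * c)) (v (b * c))" if "vle G (v a) (v b)" for a b c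
      using that vadd_right_mono[OF ordered v_in_gamma_inf v_in_gamma_inf v_in_gamma_inf]
      by (simp add: v_mult)
    show "\<not> vle G (v 0) (v 1)"
      by (simp add: v_zero v_one vle_def)
  qed
  moreover have "div_total (val_div G v)"
    unfolding div_total_def val_div_def using vle_total[OF ordered v_in_gamma_inf v_in_gamma_inf] by blast
  moreover have "div_cancellation (val_div G v)"
    unfolding div_cancellation_def val_div_def
  proof (intro allI impI)
    fix a b c
    assume "\<not> vle G (v 0) (v c)" and "vle G (v (a * c)) (v (b * c))"
    moreover obtain g where "g \<in> gcar G" "v c = Some g"
      using calculation(1) v_not_None by (fastforce simp: v_zero vle_None_left[OF ordered] v_eq_None_iff)
    ultimately show "vle G (v a) (v b)"
      using vadd_right_le_cancel[OF ordered v_in_gamma_inf v_in_gamma_inf] by (simp add: v_mult)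
  qed
  ultimately show ?thesis
    by (simp add: valuation_divisibility_def)
qed

lemma div_support_val_div: "div_support (val_div G v) = I"
  by (auto simp: div_support_def val_div_def v_zero vle_None_left[OF ordered] inf_set_def)

end

lemma bourbaki_valuationE:
  assumes "bourbaki_valuation G v"
  obtains w where "bourbaki_val G v w"
  using assms unfolding bourbaki_valuation_def bourbaki_val_def by blast

lemma bourbaki_val_of_induced:
  "bourbaki_valuation G v \<Longrightarrow> induced_field_valuation G v w \<Longrightarrow> bourbaki_val G v w"
  unfolding bourbaki_valuation_def bourbaki_val_def by blast

lemma val_div_eq_iff_bourbaki_equiv:
  assumes "bourbaki_valuation G1 v1" "bourbaki_valuation G2 v2"
  shows "val_div G1 v1 = val_div G2 v2 \<longleftrightarrow> bourbaki_equiv G1 v1 G2 v2"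
proof
  assume eq: "val_div G1 v1 = val_div G2 v2"
  obtain w1 w2 where V1: "bourbaki_val G1 v1 w1" and V2: "bourbaki_val G2 v2 w2"
    using assms by (blast elim: bourbaki_valuationE)
  have le_iff: "vle G1 (v1 a) (v1 b) \<longleftrightarrow> vle G2 (v2 a) (v2 b)" for a b
    using eq by (simp add: val_div_def fun_eq_iff)
  have inf_eq: "inf_set v1 = inf_set v2"
    using arg_cong[OF eq, of div_support]
    by (simp add: bourbaki_val.div_support_val_div[OF V1] bourbaki_val.div_support_val_div[OF V2])
  have "field_valuation_ring (inf_set v1) G1 w1 = field_valuation_ring (inf_set v2) G2 w2"
  proof (rule set_eqI)
    fix X
    show "X \<in> field_valuation_ring (inf_set v1) G1 w1 \<longleftrightarrow> X \<in> field_valuation_ring (inf_set v2) G2 w2"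
    proof (cases "X \<in> frac_field (inf_set v1)")
      case True
      then obtain a s where "s \<notin> inf_set v1" "X = frac (inf_set v1) a s"
        by (rule frac_fieldE[OF bourbaki_val.prime[OF V1]])
      then show ?thesis
        using bourbaki_val.frac_in_valuation_ring_iff[OF V1] bourbaki_val.frac_in_valuation_ring_iff[OF V2]
          le_iff inf_eq by simp
    qed (simp add: field_valuation_ring_def inf_eq)
  qed
  with inf_eq V1 V2 show "bourbaki_equiv G1 v1 G2 v2"
    unfolding bourbaki_equiv_def bourbaki_val_def by blast
next
  assume "bourbaki_equiv G1 v1 G2 v2"
  then obtain w1 w2 where inf_eq: "inf_set v1 = inf_set v2"
    and V1: "bourbaki_val G1 v1 w1" and V2: "bourbaki_val G2 v2 w2"
    and ring_eq: "field_valuation_ring (inf_set v1) G1 w1 = field_valuation_ring (inf_set v2) G2 w2"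
    using assms unfolding bourbaki_equiv_def by (blast intro: bourbaki_val_of_induced)
  have "vle G1 (v1 a) (v1 b) \<longleftrightarrow> vle G2 (v2 a) (v2 b)" for a b
  proof (cases "a \<in> inf_set v1")
    case True
    then have "v1 a = None" "v2 a = None" "v1 b = None \<longleftrightarrow> v2 b = None"
      using inf_eq by (auto simp: inf_set_def)
    then show ?thesis
      by (simp add: vle_None_left[OF bourbaki_val.ordered[OF V1]]
          vle_None_left[OF bourbaki_val.ordered[OF V2]])
  next
    case False
    then show ?thesis
      using bourbaki_val.frac_in_valuation_ring_iff[OF V1 False, of b]
        bourbaki_val.frac_in_valuation_ring_iff[OF V2, of a b] ring_eq inf_eq by simp
  qed
  then show "val_div G1 v1 = val_div G2 v2"
    by (simp add: val_div_def fun_eq_iff)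
qed

section \<open>The Bourbaki valuation of a valuation divisibility\<close>

locale val_divisibility =
  fixes R :: "'a::comm_ring_1 \<Rightarrow> 'a \<Rightarrow> bool"
  assumes valuation_divisibility: "valuation_divisibility R"
begin

abbreviation I :: "'a set" where "I \<equiv> div_support R"

lemma mem_support_iff: "a \<in> I \<longleftrightarrow> R 0 a"
  by (simp add: div_support_def)

lemma R_refl: "R a a"
  using valuation_divisibility unfolding valuation_divisibility_def divisibility_def by metis

lemma R_trans: "R a b \<Longrightarrow> R b c \<Longrightarrow> R a c"
  using valuation_divisibility unfolding valuation_divisibility_def divisibility_def by metis

lemma R_diff: "R a b \<Longrightarrow> R a c \<Longrightarrow> R a (b - c)"
  using valuation_divisibility unfolding valuation_divisibility_def divisibility_def by metis

lemma R_mult_right: "R a b \<Longrightarrow> R (a * c) (b * c)"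
  using valuation_divisibility unfolding valuation_divisibility_def divisibility_def by metis

lemma not_R_zero_one: "\<not> R 0 1"
  using valuation_divisibility unfolding valuation_divisibility_def divisibility_def by metis

lemma R_total: "R a b \<or> R b a"
  using valuation_divisibility unfolding valuation_divisibility_def div_total_def by metis

lemma R_cancel_right: "c \<notin> I \<Longrightarrow> R (a * c) (b * c) \<Longrightarrow> R a b"
  using valuation_divisibility unfolding valuation_divisibility_def div_cancellation_def div_support_def by blast

lemma R_zero_right: "R a 0"
  using R_diff[OF R_refl R_refl, of a] by simp

lemma R_uminus: "R a b \<Longrightarrow> R a (- b)"
  using R_diff[OF R_zero_right, of a b] by simp

lemma R_add: "R a b \<Longrightarrow> R a c \<Longrightarrow> R a (b + c)"
  using R_diff[of a b "- c"] R_uminus[of a c] by simp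

lemma R_support: "b \<in> I \<Longrightarrow> R a b"
  using R_trans[OF R_zero_right] by (simp add: mem_support_iff)

lemma R_if_diff_in_support: "a - b \<in> I \<Longrightarrow> R a b"
  using R_diff[OF R_refl R_support[of "a - b" a]] by simp

lemma mult_notin_support: "a \<notin> I \<Longrightarrow> b \<notin> I \<Longrightarrow> a * b \<notin> I"
  using R_cancel_right[of b 0 a] by (auto simp: mem_support_iff)

lemma mult_mem_support_iff: "a * b \<in> I \<longleftrightarrow> a \<in> I \<or> b \<in> I"
  using mult_notin_support R_mult_right[of 0 a b] R_mult_right[of 0 b a]
  by (auto simp: mem_support_iff mult.commute)

lemma prime_ideal_support: "prime_ideal I"
  unfolding prime_ideal_def
proof (intro conjI ballI allI impI)
  show "0 \<in> I" "1 \<notin> I"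
    by (simp_all add: mem_support_iff R_refl not_R_zero_one)
  show "a - b \<in> I" if "a \<in> I" "b \<in> I" for a b
    using that R_diff by (simp add: mem_support_iff)
  show "r * a \<in> I" if "a \<in> I" for a r
    using that by (simp add: mult_mem_support_iff)
  show "a \<in> I \<or> b \<in> I" if "a * b \<in> I" for a b
    using that by (simp add: mult_mem_support_iff)
qed

text \<open>The value group consists of the nonzero fractions modulo the total preorder
  \<open>a/s \<preceq> b/t \<longleftrightarrow> a t | b s\<close>, which is transitive thanks to cancellation.\<close>

definition nonzero_fracs :: "('a \<times> 'a) set" where
  "nonzero_fracs = {p. fst p \<notin> I \<and> snd p \<notin> I}"

definition frac_le :: "'a \<times> 'a \<Rightarrow> 'a \<times> 'a \<Rightarrow> bool" where
  "frac_le p q \<longleftrightarrow> R (fst p * snd q) (fst q * snd p)"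

definition same_value :: "'a \<times> 'a \<Rightarrow> 'a \<times> 'a \<Rightarrow> bool" where
  "same_value p q \<longleftrightarrow> p \<in> nonzero_fracs \<and> q \<in> nonzero_fracs \<and> frac_le p q \<and> frac_le q p"

definition pair_mult :: "'a \<times> 'a \<Rightarrow> 'a \<times> 'a \<Rightarrow> 'a \<times> 'a" where
  "pair_mult p q = (fst p * fst q, snd p * snd q)"

definition pair_add :: "'a \<times> 'a \<Rightarrow> 'a \<times> 'a \<Rightarrow> 'a \<times> 'a" where
  "pair_add p q = (fst p * snd q + fst q * snd p, snd p * snd q)"

lemma mem_nonzero_fracs_iff: "p \<in> nonzero_fracs \<longleftrightarrow> fst p \<notin> I \<and> snd p \<notin> I"
  by (simp add: nonzero_fracs_def)

lemma frac_le_refl: "frac_le p p"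
  by (simp add: frac_le_def R_refl)

lemma frac_le_total: "frac_le p q \<or> frac_le q p"
  by (simp add: frac_le_def R_total)

lemma frac_le_trans:
  assumes pq: "frac_le p q" and qr: "frac_le q r" and q: "snd q \<notin> I"
  shows "frac_le p r"
proof -
  obtain a s b t c u where abc: "p = (a, s)" "q = (b, t)" "r = (c, u)"
    by (cases p, cases q, cases r)
  have "R ((a * u) * t) ((b * u) * s)"
    using R_mult_right[of "a * t" "b * s" u] pq abc by (simp add: frac_le_def ac_simps)
  moreover have "R ((b * u) * s) ((c * s) * t)"
    using R_mult_right[of "b * u" "c * t" s] qr abc by (simp add: frac_le_def ac_simps)
  ultimately have "R ((a * u) * t) ((c * s) * t)"
    by (rule R_trans)
  then show ?thesis
    using R_cancel_right q abc by (simp add: frac_le_def)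
qed

lemma frac_le_pair_mult: "frac_le p q \<Longrightarrow> frac_le (pair_mult p r) (pair_mult q r)"
  using R_mult_right[of "fst p * snd q" "fst q * snd p" "fst r * snd r"]
  by (simp add: frac_le_def pair_mult_def ac_simps)

lemma frac_le_pair_add:
  assumes "frac_le p q"
  shows "frac_le p (pair_add p q)"
proof -
  let ?x = "fst p * snd q * snd p" and ?y = "fst q * snd p * snd p"
  have "R ?x ?y"
    using assms R_mult_right by (simp add: frac_le_def)
  then have "R ?x (?x + ?y)"
    by (rule R_add[OF R_refl])
  then show ?thesis
    by (simp add: frac_le_def pair_add_def algebra_simps)
qed

lemma pair_mult_assoc: "pair_mult (pair_mult p q) r = pair_mult p (pair_mult q r)"
  by (simp add: pair_mult_def mult.assoc)

lemma pair_mult_commute: "pair_mult p q = pair_mult q p"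
  by (simp add: pair_mult_def mult.commute)

lemma pair_mult_one_left: "pair_mult (1, 1) p = p"
  by (simp add: pair_mult_def)

lemma pair_add_commute: "pair_add p q = pair_add q p"
  by (simp add: pair_add_def ac_simps)

lemma pair_mult_nonzero: "p \<in> nonzero_fracs \<Longrightarrow> q \<in> nonzero_fracs \<Longrightarrow> pair_mult p q \<in> nonzero_fracs"
  by (simp add: mem_nonzero_fracs_iff pair_mult_def mult_notin_support)

lemma same_value_refl: "p \<in> nonzero_fracs \<Longrightarrow> same_value p p"
  by (simp add: same_value_def frac_le_refl)

lemma same_value_sym: "same_value p q \<Longrightarrow> same_value q p"
  by (auto simp: same_value_def)

lemma same_value_trans: "same_value p q \<Longrightarrow> same_value q r \<Longrightarrow> same_value p r"
  unfolding same_value_def using frac_le_trans mem_nonzero_fracs_iff by blast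

lemma same_value_pair_mult:
  assumes "same_value p p'" "same_value q q'"
  shows "same_value (pair_mult p q) (pair_mult p' q')"
proof -
  have "same_value (pair_mult p q) (pair_mult p' q)" "same_value (pair_mult q p') (pair_mult q' p')"
    using assms frac_le_pair_mult pair_mult_nonzero by (auto simp: same_value_def)
  moreover have "pair_mult p' q = pair_mult q p'" "pair_mult q' p' = pair_mult p' q'"
    by (simp_all add: pair_mult_def mult.commute)
  ultimately show ?thesis
    using same_value_trans by simp
qed

lemma frac_le_cong:
  assumes "same_value p p'" "same_value q q'"
  shows "frac_le p q \<longleftrightarrow> frac_le p' q'"
  using assms frac_le_trans[of p' p q] frac_le_trans[of p' q q'] frac_le_trans[of p p' q']
    frac_le_trans[of p q' q]
  by (auto simp: same_value_def mem_nonzero_fracs_iff)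


lemma frac_le_swap: "frac_le (prod.swap p) (prod.swap q) \<longleftrightarrow> frac_le q p"
  by (simp add: frac_le_def mult.commute)

lemma same_value_swap: "same_value p q \<Longrightarrow> same_value (prod.swap p) (prod.swap q)"
  by (simp add: same_value_def frac_le_swap mem_nonzero_fracs_iff)

definition canon :: "'a \<times> 'a \<Rightarrow> 'a \<times> 'a" where
  "canon p = (SOME q. same_value p q)"

lemma same_value_canon: "p \<in> nonzero_fracs \<Longrightarrow> same_value p (canon p)"
  unfolding canon_def by (rule someI) (rule same_value_refl)

lemma canon_eq_iff:
  assumes "p \<in> nonzero_fracs" "q \<in> nonzero_fracs"
  shows "canon p = canon q \<longleftrightarrow> same_value p q"
proof
  assume "canon p = canon q"
  then have "same_value p (canon q)"
    using same_value_canon[OF assms(1)] by simp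
  then show "same_value p q"
    using same_value_trans same_value_sym[OF same_value_canon[OF assms(2)]] by blast
next
  assume pq: "same_value p q"
  have "same_value p r \<longleftrightarrow> same_value q r" for r
    using same_value_trans[OF pq] same_value_trans[OF same_value_sym[OF pq]] by blast
  then show "canon p = canon q"
    by (simp add: canon_def)
qed

text \<open>A value is stored as the canonical representative \<open>c\<close> of its class, in the form \<open>{{c}}\<close>
  only because the value type \<open>('a \<times> 'a) set set\<close> is prescribed.\<close>

definition vclass :: "'a \<times> 'a \<Rightarrow> ('a \<times> 'a) set set" where
  "vclass p = {{canon p}}"

definition vrep :: "('a \<times> 'a) set set \<Rightarrow> 'a \<times> 'a" where
  "vrep X = the_elem (the_elem X)"

lemma vrep_vclass: "vrep (vclass p) = canon p"
  by (simp add: vrep_def vclass_def)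

lemma vclass_eq_iff: "p \<in> nonzero_fracs \<Longrightarrow> q \<in> nonzero_fracs \<Longrightarrow> vclass p = vclass q \<longleftrightarrow> same_value p q"
  by (simp add: vclass_def canon_eq_iff)

definition value_group :: "('a \<times> 'a) set set ogroup" where
  "value_group =
    \<lparr>gcar = vclass ` nonzero_fracs,
     gadd = \<lambda>X Y. vclass (pair_mult (vrep X) (vrep Y)),
     gzero = vclass (1, 1),
     gneg = \<lambda>X. vclass (prod.swap (vrep X)),
     gle = \<lambda>X Y. frac_le (vrep X) (vrep Y)\<rparr>"

lemma one_nonzero_frac: "(1, 1) \<in> nonzero_fracs"
  using prime_ideal_one[OF prime_ideal_support] by (simp add: mem_nonzero_fracs_iff)

lemma value_group_add:
  assumes "p \<in> nonzero_fracs" "q \<in> nonzero_fracs"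
  shows "gadd value_group (vclass p) (vclass q) = vclass (pair_mult p q)"
proof -
  have "same_value (pair_mult (canon p) (canon q)) (pair_mult p q)"
    using same_value_pair_mult[OF same_value_sym[OF same_value_canon[OF assms(1)]]
        same_value_sym[OF same_value_canon[OF assms(2)]]] .
  then show ?thesis
    by (simp add: value_group_def vrep_vclass vclass_eq_iff same_value_def)
qed

lemma value_group_neg:
  assumes "p \<in> nonzero_fracs"
  shows "gneg value_group (vclass p) = vclass (prod.swap p)"
proof -
  have "same_value (prod.swap (canon p)) (prod.swap p)"
    using same_value_swap[OF same_value_sym[OF same_value_canon[OF assms]]] .
  then show ?thesis
    by (simp add: value_group_def vrep_vclass vclass_eq_iff same_value_def)
qed

lemma value_group_le:
  assumes "p \<in> nonzero_fracs" "q \<in> nonzero_fracs"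
  shows "gle value_group (vclass p) (vclass q) \<longleftrightarrow> frac_le p q"
  using frac_le_cong[OF same_value_canon[OF assms(1)] same_value_canon[OF assms(2)]]
  by (simp add: value_group_def vrep_vclass)

lemma ordered_ab_group_value_group: "ordered_ab_group value_group"
proof -
  have car: "gcar value_group = vclass ` nonzero_fracs" and zero: "gzero value_group = vclass (1, 1)"
    by (simp_all add: value_group_def)
  have swap: "p \<in> nonzero_fracs \<Longrightarrow> prod.swap p \<in> nonzero_fracs" for p
    by (simp add: mem_nonzero_fracs_iff)
  have inverse: "vclass (pair_mult (prod.swap p) p) = vclass (1, 1)" if p: "p \<in> nonzero_fracs" for p
  proof -
    have "pair_mult (prod.swap p) p \<in> nonzero_fracs"
      using p swap pair_mult_nonzero by blast
    moreover have "frac_le (pair_mult (prod.swap p) p) (1, 1)" "frac_le (1, 1) (pair_mult (prod.swap p) p)"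
      by (simp_all add: frac_le_def pair_mult_def R_refl mult.commute)
    ultimately show ?thesis
      using p by (simp add: vclass_eq_iff same_value_def one_nonzero_frac)
  qed
  show ?thesis
    unfolding ordered_ab_group_def car zero ball_simps
  proof (intro conjI ballI impI)
    show "gadd value_group (vclass p) (vclass q) = gadd value_group (vclass q) (vclass p)"
      if "p \<in> nonzero_fracs" "q \<in> nonzero_fracs" for p q
      using that by (simp add: value_group_add pair_mult_commute)
    show "gle value_group (vclass p) (vclass r)"
      if "p \<in> nonzero_fracs" "q \<in> nonzero_fracs" "gle value_group (vclass p) (vclass q)"
        "r \<in> nonzero_fracs" "gle value_group (vclass q) (vclass r)" for p q r
      using that frac_le_trans by (simp add: value_group_le mem_nonzero_fracs_iff)
    show "vclass p = vclass q"
      if "p \<in> nonzero_fracs" "q \<in> nonzero_fracs" "gle value_group (vclass p) (vclass q)"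
        "gle value_group (vclass q) (vclass p)" for p q
      using that by (simp add: value_group_le vclass_eq_iff same_value_def)
  qed (simp_all add: value_group_add value_group_neg value_group_le one_nonzero_frac pair_mult_nonzero
      swap inverse frac_le_refl frac_le_total frac_le_pair_mult pair_mult_assoc pair_mult_one_left)
qed


definition frac_val :: "'a \<times> 'a \<Rightarrow> ('a \<times> 'a) set set option" where
  "frac_val p = (if fst p \<in> I then None else Some (vclass p))"

definition ring_val :: "'a \<Rightarrow> ('a \<times> 'a) set set option" where
  "ring_val a = frac_val (a, 1)"

definition field_val :: "('a \<times> 'a) set \<Rightarrow> ('a \<times> 'a) set set option" where
  "field_val X = frac_val (SOME p. p \<in> X)"

lemma frac_val_in_gamma_inf: "snd p \<notin> I \<Longrightarrow> in_gamma_inf value_group (frac_val p)"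
  by (simp add: frac_val_def in_gamma_inf_def value_group_def mem_nonzero_fracs_iff)

lemma frac_val_le_iff:
  assumes p: "snd p \<notin> I" and q: "snd q \<notin> I"
  shows "vle value_group (frac_val p) (frac_val q) \<longleftrightarrow> frac_le p q"
proof (cases "fst q \<in> I")
  case True
  then show ?thesis
    by (simp add: frac_val_def vle_def frac_le_def R_support mult_mem_support_iff)
next
  case q_nonzero: False
  show ?thesis
  proof (cases "fst p \<in> I")
    case True
    have "\<not> frac_le p q"
    proof
      assume "frac_le p q"
      moreover have "fst p * snd q \<in> I"
        using True by (simp add: mult_mem_support_iff)
      ultimately have "fst q * snd p \<in> I"
        using R_trans by (auto simp: frac_le_def mem_support_iff)
      with q_nonzero p show False
        by (simp add: mult_mem_support_iff)
    qed
    with True q_nonzero show ?thesis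
      by (simp add: frac_val_def vle_def)
  next
    case False
    with q_nonzero p q show ?thesis
      by (simp add: frac_val_def vle_def value_group_le mem_nonzero_fracs_iff)
  qed
qed

lemma frac_val_pair_mult:
  assumes "snd p \<notin> I" "snd q \<notin> I"
  shows "frac_val (pair_mult p q) = vadd value_group (frac_val p) (frac_val q)"
proof (cases "fst p \<in> I \<or> fst q \<in> I")
  case True
  then show ?thesis
    by (auto simp: frac_val_def vadd_def pair_mult_def mult_mem_support_iff)
next
  case False
  with assms show ?thesis
    by (simp add: frac_val_def vadd_def value_group_add mem_nonzero_fracs_iff pair_mult_def
        mult_mem_support_iff)
qed

lemma frac_val_pair_add:
  assumes p: "snd p \<notin> I" and q: "snd q \<notin> I"
  shows "vle value_group (vmin value_group (frac_val p) (frac_val q)) (frac_val (pair_add p q))"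
proof -
  have sum: "snd (pair_add p q) \<notin> I"
    using p q by (simp add: pair_add_def mult_notin_support)
  show ?thesis
  proof (cases "frac_le p q")
    case True
    then show ?thesis
      using frac_le_pair_add[OF True] p q sum by (simp add: vmin_def frac_val_le_iff)
  next
    case False
    then have "frac_le q (pair_add q p)"
      using frac_le_pair_add frac_le_total by blast
    with False show ?thesis
      using p q sum by (simp add: vmin_def frac_val_le_iff pair_add_commute)
  qed
qed

lemma frac_val_eq_if_frac_rel:
  assumes "((a, s), (b, t)) \<in> frac_rel I"
  shows "frac_val (a, s) = frac_val (b, t)"
proof -
  have s: "s \<notin> I" and t: "t \<notin> I" and diff: "a * t - b * s \<in> I"
    using assms by (simp_all add: frac_rel_def)
  have "b * s - a * t \<in> I"
    using prime_ideal_uminus[OF prime_ideal_support diff] by simp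
  with diff have "frac_le (a, s) (b, t)" "frac_le (b, t) (a, s)"
    by (simp_all add: frac_le_def R_if_diff_in_support)
  then show ?thesis
    using vle_antisym[OF ordered_ab_group_value_group frac_val_in_gamma_inf frac_val_in_gamma_inf] s t
    by (simp add: frac_val_le_iff)
qed

lemma field_val_frac:
  assumes s: "s \<notin> I"
  shows "field_val (frac I a s) = frac_val (a, s)"
proof -
  let ?p = "SOME p. p \<in> frac I a s"
  have "(a, s) \<in> frac I a s"
    using s by (simp add: mem_frac_iff[OF prime_ideal_support])
  then have "?p \<in> frac I a s"
    by (rule someI)
  then have "((a, s), ?p) \<in> frac_rel I"
    by (simp add: frac_def)
  then show ?thesis
    unfolding field_val_def by (cases ?p) (simp add: frac_val_eq_if_frac_rel)
qed

lemma frac_field_valuation_field_val: "frac_field_valuation I value_group field_val"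
  unfolding frac_field_valuation_def
proof (intro conjI ballI)
  fix X
  assume "X \<in> frac_field I"
  then obtain a s where s: "s \<notin> I" and X: "X = frac I a s"
    by (rule frac_fieldE[OF prime_ideal_support])
  show "in_gamma_inf value_group (field_val X)"
    using s by (simp add: X field_val_frac frac_val_in_gamma_inf)
  have "X = frac I 0 1 \<longleftrightarrow> a \<in> I"
    using s prime_ideal_one[OF prime_ideal_support] by (simp add: X frac_eq_iff[OF prime_ideal_support])
  then show "field_val X = None \<longleftrightarrow> X = frac I 0 1"
    using s by (simp add: X field_val_frac frac_val_def)
next
  fix X Y
  assume "X \<in> frac_field I" "Y \<in> frac_field I"
  then obtain a s b t where s: "s \<notin> I" and X: "X = frac I a s" and t: "t \<notin> I" and Y: "Y = frac I b t"
    by (metis frac_fieldE[OF prime_ideal_support])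
  have st: "s * t \<notin> I"
    using s t by (rule mult_notin_support)
  show "field_val (frac_mult I X Y) = vadd value_group (field_val X) (field_val Y)"
    using frac_val_pair_mult[of "(a, s)" "(b, t)"] s t st
    by (simp add: X Y frac_mult_frac[OF prime_ideal_support] field_val_frac pair_mult_def)
  show "vle value_group (vmin value_group (field_val X) (field_val Y)) (field_val (frac_add I X Y))"
    using frac_val_pair_add[of "(a, s)" "(b, t)"] s t st
    by (simp add: X Y frac_add_frac[OF prime_ideal_support] field_val_frac pair_add_def)
qed

lemma inf_set_ring_val: "inf_set ring_val = I"
  by (auto simp: inf_set_def ring_val_def frac_val_def)

lemma bourbaki_valuation_ring_val: "bourbaki_valuation value_group ring_val"
  unfolding bourbaki_valuation_def induced_field_valuation_def inf_set_ring_val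
proof (intro conjI allI exI)
  show "in_gamma_inf value_group (ring_val a)" for a
    using prime_ideal_one[OF prime_ideal_support] by (simp add: ring_val_def frac_val_in_gamma_inf)
  show "ring_val a = field_val (frac I a 1)" for a
    using prime_ideal_one[OF prime_ideal_support] by (simp add: ring_val_def field_val_frac)
qed (simp_all add: ordered_ab_group_value_group prime_ideal_support frac_field_valuation_field_val)

lemma val_div_ring_val: "val_div value_group ring_val = R"
  using prime_ideal_one[OF prime_ideal_support]
  by (simp add: fun_eq_iff val_div_def ring_val_def frac_val_le_iff frac_le_def)

end

theorem theorem3p1:
  assumes "(1::'a::comm_ring_1) \<noteq> 0"
  shows
    "(\<forall>(G :: 'g ogroup) (v :: 'a \<Rightarrow> 'g option). bourbaki_valuation G v \<longrightarrow>
        valuation_divisibility (val_div G v) \<and> div_support (val_div G v) = inf_set v) \<and>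
     (\<forall>(G1 :: 'g ogroup) (v1 :: 'a \<Rightarrow> 'g option) (G2 :: 'h ogroup) (v2 :: 'a \<Rightarrow> 'h option).
        bourbaki_valuation G1 v1 \<longrightarrow> bourbaki_valuation G2 v2 \<longrightarrow>
        (val_div G1 v1 = val_div G2 v2 \<longleftrightarrow> bourbaki_equiv G1 v1 G2 v2)) \<and>
     (\<forall>R :: 'a \<Rightarrow> 'a \<Rightarrow> bool. valuation_divisibility R \<longrightarrow>
        (\<exists>(G :: ('a \<times> 'a) set set ogroup) (v :: 'a \<Rightarrow> ('a \<times> 'a) set set option).
           bourbaki_valuation G v \<and> val_div G v = R))"
proof (intro conjI; intro allI impI)
  fix G :: "'g ogroup" and v :: "'a \<Rightarrow> 'g option"
  assume "bourbaki_valuation G v"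
  then obtain w where "bourbaki_val G v w"
    by (rule bourbaki_valuationE)
  then show "valuation_divisibility (val_div G v) \<and> div_support (val_div G v) = inf_set v"
    by (simp add: bourbaki_val.valuation_divisibility_val_div bourbaki_val.div_support_val_div)
next
  fix G1 :: "'g ogroup" and v1 :: "'a \<Rightarrow> 'g option" and G2 :: "'h ogroup" and v2 :: "'a \<Rightarrow> 'h option"
  assume "bourbaki_valuation G1 v1" "bourbaki_valuation G2 v2"
  then show "val_div G1 v1 = val_div G2 v2 \<longleftrightarrow> bourbaki_equiv G1 v1 G2 v2"
    by (rule val_div_eq_iff_bourbaki_equiv)
next
  fix R :: "'a \<Rightarrow> 'a \<Rightarrow> bool"
  assume "valuation_divisibility R"
  then interpret val_divisibility R
    by unfold_locales
  show "\<exists>(G :: ('a \<times> 'a) set set ogroup) (v :: 'a \<Rightarrow> ('a \<times> 'a) set set option).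
      bourbaki_valuation G v \<and> val_div G v = R"
    using bourbaki_valuation_ring_val val_div_ring_val by blast
qed

end
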